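(* An ideal SALT for $n$ keys with total number of accesses $m$ can be built in $O(\min(n\log n, m))$ time, uses $O(n)$ memory, and has depth $O\!\left(\frac{\log m}{\log\log m}\right)$.
   Context: A Generic Self-Adjusting Tree (GSAT) with degree function $D$ for a set of integer keys with access counts $ac_i\ge1$ consists of $m=\sum_i ac_i$, an array of $k\le\lceil D(m)\rceil$ representative keys with their access counts, and $k+1$ child subtrees that are GSATs for the keys lying strictly before the first representative, strictly between consecutive representatives, and strictly after the last; every node stores at least one key. $m(T')$ is the total access count of keys in subtree $T'$. A GSAT is ideal if each child $T_j$ of the root satisfies $m(T_j)\le m/(D(m)+1)$ and each child is ideal. A SALT (Self-Adjusting Log Tree) is a GSAT with $D(m)=\log_2 m$ (and binary search inside nodes). Cost model for construction: given keys sorted with prefix sums of access counts, a node with subtree access count $m'$ costs $O(D(m'))$ time and memory plus $O(\log n)$ time per representative (binary search on prefix sums), besides recursive construction of its children. The depth bound is derived from the recurrence $d(m)\le 1+d\!\left(\frac{m}{\log_2 m}\right)$ for the depth $d(m)$ of an ideal SALT with $m$ total accesses. *)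

theory Defs
  imports Complex_Main
begin

text \<open>Generic Self-Adjusting Trees.  A node stores its total access count m,
  the array of its representatives (key, access count), and its children.
  Leaf is the empty subtree (for an empty key range).\<close>

datatype gsat = Leaf | Node nat "(int \<times> nat) list" "gsat list"

fun mass :: "gsat \<Rightarrow> nat" where
  "mass Leaf = 0"
| "mass (Node m _ _) = m"

text \<open>Keys (with counts) of kcs lying strictly before the first representative (j = 0),
  strictly between representatives j-1 and j, or strictly after the last (j = length reps).\<close>
definition segment :: "(int \<times> nat) list \<Rightarrow> nat \<Rightarrow> (int \<times> nat) list \<Rightarrow> (int \<times> nat) list" where
  "segment reps j kcs =
     filter (\<lambda>p. (j = 0 \<or> fst (reps ! (j - 1)) < fst p) \<and> (length reps \<le> j \<or> fst p < fst (reps ! j))) kcs"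

inductive is_gsat :: "(real \<Rightarrow> real) \<Rightarrow> (int \<times> nat) list \<Rightarrow> gsat \<Rightarrow> bool" for D where
  leaf: "is_gsat D [] Leaf"
| node: "\<lbrakk> kcs \<noteq> [];
           m = sum_list (map snd kcs);
           reps \<noteq> [];
           int (length reps) \<le> max 1 \<lceil>D (real m)\<rceil>;
           sorted_wrt (\<lambda>a b. fst a < fst b) reps;
           set reps \<subseteq> set kcs;
           length ts = length reps + 1;
           \<forall>j < length ts. is_gsat D (segment reps j kcs) (ts ! j) \<rbrakk>
         \<Longrightarrow> is_gsat D kcs (Node m reps ts)"

fun ideal :: "(real \<Rightarrow> real) \<Rightarrow> gsat \<Rightarrow> bool" where
  "ideal D Leaf = True"
| "ideal D (Node m reps ts) =
     (\<forall>t \<in> set ts. real (mass t) \<le> real m / (D (real m) + 1) \<and> ideal D t)"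

definition D_salt :: "real \<Rightarrow> real" where
  "D_salt x = log 2 x"

definition is_salt :: "(int \<times> nat) list \<Rightarrow> gsat \<Rightarrow> bool" where
  "is_salt kcs T = is_gsat D_salt kcs T"

definition ideal_salt :: "gsat \<Rightarrow> bool" where
  "ideal_salt T = ideal D_salt T"

fun depth :: "gsat \<Rightarrow> nat" where
  "depth Leaf = 0"
| "depth (Node m reps ts) = 1 + Max (set (0 # map depth ts))"

fun nkeys :: "gsat \<Rightarrow> nat" where
  "nkeys Leaf = 0"
| "nkeys (Node m reps ts) = length reps + sum_list (map nkeys ts)"

text \<open>Cost model for construction: a node with k representatives costs 1 + k
  (allocating its arrays of k representatives and k+1 child pointers) plus one binary
  search over the prefix sums of its key range per representative, costing
  1 + log2 (number of keys in the subtree), plus the cost of its children.\<close>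
fun build_time :: "gsat \<Rightarrow> real" where
  "build_time Leaf = 0"
| "build_time (Node m reps ts) =
     real (1 + length reps)
     + real (length reps) * (1 + log 2 (real (nkeys (Node m reps ts))))
     + sum_list (map build_time ts)"

fun build_memory :: "gsat \<Rightarrow> real" where
  "build_memory Leaf = 0"
| "build_memory (Node m reps ts) = real (1 + length reps) + sum_list (map build_memory ts)"

end

theory Submission
  imports Defs "HOL-Library.Discrete_Functions"
begin

text \<open>The tree is built greedily: scanning the keys, a block is closed and the next key is
  promoted to a representative as soon as the block's access count would exceed
  \<open>M = m / (log m + 1)\<close>. All children are then light enough for the tree to be ideal, and there
  are at most \<open>\<lceil>log m\<rceil>\<close> representatives because each one closes a block of weight above \<open>M\<close>.
  Every key is a representative exactly once, which gives linear memory and the \<open>n log n\<close> time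
  bound. The linear bound in \<open>m\<close> comes from the potential \<open>1000 m - 2 \<surd>m\<close>: a node costs
  \<open>O(log\<^sup>2 m)\<close>, and splitting weight \<open>m\<close> into parts of size at most \<open>m / (log m + 1)\<close> raises
  the sum of square roots by about \<open>\<surd>(m log m)\<close>. For the depth, the exponent
  \<open>l = \<lfloor>log m\<rfloor>\<close> drops by at least \<open>\<lfloor>log (l + 1)\<rfloor>\<close> per level, so there are
  \<open>O(l / log l)\<close> levels.\<close>

section \<open>Depth bound\<close>

definition band :: "nat \<Rightarrow> nat" where
  "band l = floor_log (l + 1)"

text \<open>\<open>level_steps l\<close> bounds the number of steps \<open>l \<mapsto> l'\<close> with \<open>l' + band l \<le> l\<close> that lead
  from \<open>l\<close> to \<open>0\<close>: in band \<open>j\<close>, i.e. \<open>2 ^ j \<le> l + 1 < 2 ^ (j + 1)\<close>, every step lowers \<open>l\<close> by at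
  least \<open>j\<close>, so at most \<open>(l + 1) div j\<close> steps are taken there; \<open>band_steps j\<close> pays for the lower
  bands.\<close>

definition band_steps :: "nat \<Rightarrow> nat" where
  "band_steps j = (\<Sum>i\<in>{1..<j}. 2 ^ (i + 1) div i + 1)"

definition level_steps :: "nat \<Rightarrow> nat" where
  "level_steps l = (if l = 0 then 0 else band_steps (band l) + (l + 1) div band l)"

definition depth_bound :: "nat \<Rightarrow> nat" where
  "depth_bound m = (if m = 0 then 0 else 1 + level_steps (floor_log m))"

lemma band_pos: "1 \<le> l \<Longrightarrow> 1 \<le> band l"
  using floor_log_le_iff[of 2 "l + 1"] floor_log_power[of 1] by (simp add: band_def)

lemma band_mono: "l \<le> l' \<Longrightarrow> band l \<le> band l'"
  unfolding band_def by (intro floor_log_le_iff) simp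

lemma two_power_band_le: "2 ^ band l \<le> l + 1"
  unfolding band_def by (rule floor_log_exp2_le) simp

lemma less_two_power_Suc_band: "l + 1 < 2 ^ Suc (band l)"
  unfolding band_def using floor_log_exp2_gt[of "l + 1"] by simp

lemma band_le: "band l \<le> l + 1"
  using two_power_band_le[of l] less_exp[of "band l"] by linarith

lemma band_steps_mono: "j \<le> j' \<Longrightarrow> band_steps j \<le> band_steps j'"
  unfolding band_steps_def by (rule sum_mono2) auto

lemma band_steps_Suc: "1 \<le> j \<Longrightarrow> band_steps (Suc j) = band_steps j + (2 ^ (j + 1) div j + 1)"
  unfolding band_steps_def by (simp add: atLeastLessThanSuc)

lemma level_steps_decrease:
  assumes l: "1 \<le> l" and l': "l' + band l \<le> l"
  shows "level_steps l' + 1 \<le> level_steps l"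
proof -
  have j: "1 \<le> band l" using band_pos[OF l] .
  show ?thesis
  proof (cases "l' = 0")
    case True
    have "1 \<le> (l + 1) div band l" using band_le[of l] j by (simp add: Suc_le_eq div_greater_zero_iff)
    then show ?thesis using True l by (simp add: level_steps_def)
  next
    case False
    then have l'1: "1 \<le> l'" by simp
    have "band l' \<le> band l" using l' by (intro band_mono) simp
    then consider "band l' = band l" | "band l' + 1 \<le> band l" by linarith
    then show ?thesis
    proof cases
      case 1
      have "(l' + 1) div band l + 1 = (l' + 1 + band l) div band l"
        using div_add_self2[of "band l" "l' + 1"] j by simp
      also have "\<dots> \<le> (l + 1) div band l" using l' by (intro div_le_mono) simp
      finally show ?thesis using 1 l l'1 by (simp add: level_steps_def)
    next
      case 2
      have "(l' + 1) div band l' \<le> 2 ^ (band l' + 1) div band l'"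
        using less_two_power_Suc_band[of l'] by (intro div_le_mono) simp
      then have "level_steps l' + 1 \<le> band_steps (Suc (band l'))"
        using l'1 band_pos[OF l'1] by (simp add: level_steps_def band_steps_Suc)
      also have "\<dots> \<le> band_steps (band l)" using 2 by (intro band_steps_mono) simp
      finally show ?thesis using l by (simp add: level_steps_def)
    qed
  qed
qed

lemma band_steps_le: "1 \<le> j \<Longrightarrow> real (band_steps j) \<le> 8 * 2 ^ j / j"
proof (induction j rule: dec_induct)
  case base
  then show ?case by (simp add: band_steps_def)
next
  case (step j)
  show ?case
  proof (cases "j = 1")
    case True
    then show ?thesis by (simp add: band_steps_def)
  next
    case False
    then have j2: "2 \<le> j" using step(1) by simp
    then have jp: "real j > 0" by simp
    have quadratic: "real j * (real j + 1) \<le> (6 * real j - 10) * 2 ^ j"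
    proof -
      have "j + 1 \<le> 2 ^ j" using less_exp[of j] by (simp add: Suc_le_eq)
      then have "real j + 1 \<le> 2 ^ j" by (metis of_nat_1 of_nat_add of_nat_le_iff of_nat_numeral of_nat_power)
      then show ?thesis using j2 by (intro mult_mono) auto
    qed
    have "real (band_steps (Suc j)) = real (band_steps j) + real (2 ^ (j + 1) div j) + 1"
      using step(1) by (simp add: band_steps_Suc)
    also have "\<dots> \<le> 8 * 2 ^ j / j + 2 ^ (j + 1) / j + 1"
      using step(3) of_nat_div_le_of_nat[of "2 ^ (j + 1)" j, where 'a=real] by simp
    also have "\<dots> = (10 * 2 ^ j + j) / j"
      using jp by (simp add: field_simps)
    also have "\<dots> \<le> 8 * 2 ^ Suc j / Suc j"
      using quadratic jp by (simp add: field_simps)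
    finally show ?thesis .
  qed
qed

lemma depth_bound_le_band:
  assumes l: "1 \<le> floor_log m"
  shows "real (depth_bound m) \<le> 10 * (real (floor_log m) + 1) / band (floor_log m)"
proof -
  define l where "l = floor_log m"
  define j where "j = band l"
  have j: "1 \<le> j" using band_pos l unfolding j_def l_def by simp
  have "m \<noteq> 0" using l by (intro notI) simp
  then have "depth_bound m = 1 + band_steps j + (l + 1) div j"
    using l unfolding depth_bound_def level_steps_def l_def j_def by simp
  then have "real (depth_bound m) \<le> 1 + 8 * 2 ^ j / j + (real l + 1) / j"
    using band_steps_le[OF j] of_nat_div_le_of_nat[of "l + 1" j, where 'a=real] by (simp add: add.commute)
  also have "\<dots> \<le> 10 * (real l + 1) / j"
  proof -
    have "2 ^ j \<le> l + 1" using two_power_band_le unfolding j_def .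
    then have "(2::real) ^ j \<le> real l + 1"
      by (metis of_nat_1 of_nat_add of_nat_le_iff of_nat_numeral of_nat_power)
    then have "8 * 2 ^ j / j \<le> 8 * (real l + 1) / j" by (intro divide_right_mono) auto
    moreover have "1 \<le> (real l + 1) / j" using band_le[of l] j unfolding j_def by simp
    ultimately show ?thesis by (simp add: add_divide_distrib)
  qed
  finally show ?thesis unfolding l_def j_def .
qed

lemma depth_bound_le:
  assumes m: "4 \<le> m"
  shows "real (depth_bound m) \<le> 40 * log 2 (real m) / log 2 (log 2 (real m))"
proof -
  define l where "l = floor_log m"
  define L where "L = log 2 (real m)"
  have l: "2 \<le> l" unfolding l_def using floor_log_le_iff[OF m] floor_log_power[of 2] by simp
  have lL: "real l \<le> L" unfolding L_def l_def using floor_log_exp2_le[of m] m le_log2_of_power by simp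
  have Ll: "L < real l + 1"
    unfolding L_def l_def using log2_of_power_less[of m "floor_log m + 1"] floor_log_exp2_gt[of m] m by simp
  have "real (l + 1) < real (2 ^ Suc (band l))"
    using less_two_power_Suc_band[of l] by (simp only: of_nat_less_iff)
  then have "L < 2 ^ Suc (band l)" using Ll by simp
  then have "log 2 L < log 2 (2 ^ Suc (band l))" using l lL by (subst log_less_cancel_iff) auto
  then have logL: "log 2 L < band l + 1" using log_pow_cancel[of 2 "Suc (band l)"] by simp
  have logL1: "1 \<le> log 2 L" using l lL by simp
  have "real (depth_bound m) \<le> 10 * (real l + 1) / band l"
    using depth_bound_le_band[of m] l unfolding l_def by simp
  also have "\<dots> \<le> 10 * (2 * L) / (log 2 L / 2)"
    using lL l logL logL1 band_pos[of l] by (intro frac_le) auto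
  finally show ?thesis unfolding L_def by simp
qed

lemma depth_bound_child:
  assumes m': "1 \<le> m'" and lt: "m' < m" and small: "real m' \<le> real m / (log 2 (real m) + 1)"
  shows "depth_bound m' + 1 \<le> depth_bound m"
proof -
  define l where "l = floor_log m"
  define l' where "l' = floor_log m'"
  have m2: "2 \<le> m" using m' lt by simp
  have l: "1 \<le> l" unfolding l_def using floor_log_le_iff[OF m2] floor_log_power[of 1] by simp
  have ml: "2 ^ l \<le> m" unfolding l_def by (rule floor_log_exp2_le) (use m2 in simp)
  have mu: "m < 2 ^ (l + 1)" unfolding l_def using floor_log_exp2_gt[of m] by simp
  have m'l: "2 ^ l' \<le> m'" unfolding l'_def by (rule floor_log_exp2_le) (use m' in simp)
  have lL: "real l \<le> log 2 (real m)" using le_log2_of_power[OF ml] by simp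
  have "real (2 ^ band l) \<le> real l + 1" using two_power_band_le[of l] by (simp only: of_nat_le_iff)
  then have "real (2 ^ (l' + band l)) \<le> real m' * (log 2 (real m) + 1)"
    using m'l lL by (simp add: power_add mult_mono flip: of_nat_le_iff)
  also have "\<dots> \<le> real m" using small lL by (simp add: field_simps)
  also have "\<dots> < real (2 ^ (l + 1))" using mu by (simp only: of_nat_less_iff)
  finally have "l' + band l < l + 1" by (simp only: of_nat_less_iff power_strict_increasing_iff)
  then have "level_steps l' + 1 \<le> level_steps l" using level_steps_decrease[OF l] by simp
  then show ?thesis using m' lt unfolding depth_bound_def l_def l'_def by simp
qed

section \<open>Time potential\<close>

definition node_cost :: "nat \<Rightarrow> real" where
  "node_cost m = (1 + log 2 (real m)) * log 2 (real m)"

definition time_potential :: "nat \<Rightarrow> real" where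
  "time_potential m = 1000 * real m - 2 * sqrt (real m)"

lemma two_powr_half_log: "0 < x \<Longrightarrow> 2 powr (log 2 x / 2) = sqrt x"
  by (simp add: powr_half_sqrt_powr)

lemma node_cost_le_sqrt:
  assumes m: "0 < m" and "16 \<le> log 2 (real m)"
  shows "node_cost m \<le> 2 * sqrt (real m)"
proof -
  define L where "L = log 2 (real m)"
  define s where "s = nat \<lfloor>L / 2\<rfloor>"
  have L: "16 \<le> L" using assms unfolding L_def by simp
  have s: "8 \<le> s" and sL: "real s \<le> L / 2" and Ls: "L < 2 * real s + 2"
    using L unfolding s_def by linarith+
  have "(2 * s + 3) * (2 * s + 2) \<le> 2 * 2 ^ s"
    using s
  proof (induction s rule: dec_induct)
    case (step s)
    have "(2 * Suc s + 3) * (2 * Suc s + 2) \<le> 2 * ((2 * s + 3) * (2 * s + 2))"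
      using step(1) by (simp add: algebra_simps)
    then show ?case using step(3) by simp
  qed simp
  then have nat_bound: "real ((2 * s + 3) * (2 * s + 2)) \<le> real (2 * 2 ^ s)" by (simp only: of_nat_le_iff)
  have "node_cost m \<le> (2 * real s + 3) * (2 * real s + 2)"
    unfolding node_cost_def L_def[symmetric] using L Ls by (intro mult_mono) auto
  also have "\<dots> \<le> 2 * 2 powr real s" using nat_bound by (simp add: powr_realpow algebra_simps)
  also have "\<dots> \<le> 2 * 2 powr (L / 2)" using sL by simp
  also have "\<dots> = 2 * sqrt (real m)" using two_powr_half_log[of "real m"] m unfolding L_def by simp
  finally show ?thesis .
qed

lemma sum_list_sqrt_gain:
  assumes "\<forall>x\<in>set xs. real x * c \<le> real m" "0 \<le> c"
  shows "real (sum_list xs) * sqrt c \<le> (\<Sum>x\<leftarrow>xs. sqrt (real x)) * sqrt (real m)"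
proof -
  have "real x * sqrt c \<le> sqrt (real x) * sqrt (real m)" if "x \<in> set xs" for x
  proof -
    have "real x * sqrt c = sqrt (real x) * sqrt (real x * c)"
      by (simp add: real_sqrt_mult)
    also have "\<dots> \<le> sqrt (real x) * sqrt (real m)"
      using assms that by (intro mult_left_mono) auto
    finally show ?thesis .
  qed
  then have "(\<Sum>x\<leftarrow>xs. real x * sqrt c) \<le> (\<Sum>x\<leftarrow>xs. sqrt (real x) * sqrt (real m))"
    by (rule sum_list_mono)
  then show ?thesis by (simp add: sum_list_mult_const sum_list_of_nat)
qed

lemma time_potential_split:
  assumes m: "1 \<le> m" and small: "\<forall>x\<in>set ms. real x \<le> real m / (log 2 (real m) + 1)"
    and total: "sum_list ms + 1 \<le> m"
  shows "node_cost m + sum_list (map time_potential ms) \<le> time_potential m"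
proof -
  define L where "L = log 2 (real m)"
  define S where "S = real (sum_list ms)"
  define Q where "Q = (\<Sum>x\<leftarrow>ms. sqrt (real x))"
  define sm where "sm = sqrt (real m)"
  have L0: "0 \<le> L" unfolding L_def using m by simp
  have sm1: "1 \<le> sm" "sm * sm = real m" unfolding sm_def using m by auto
  then have sm: "0 < sm" "sm \<le> real m" "sm * sm = real m" using mult_left_mono[OF sm1(1), of sm] by auto
  have Q0: "0 \<le> Q" unfolding Q_def by (rule sum_list_nonneg) auto
  have S: "S + 1 \<le> real m" unfolding S_def using total by (simp flip: of_nat_le_iff)
  have lhs: "node_cost m + sum_list (map time_potential ms) = node_cost m + 1000 * S - 2 * Q"
    unfolding S_def Q_def by (induction ms) (simp_all add: time_potential_def algebra_simps)
  have "\<forall>x\<in>set ms. real x * (L + 1) \<le> real m" using small L0 unfolding L_def by (simp add: field_simps)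
  then have gain: "S * sqrt (L + 1) \<le> Q * sm"
    unfolding S_def Q_def sm_def using L0 by (intro sum_list_sqrt_gain) auto
  show ?thesis
  proof (cases "L < 16")
    case True
    have "node_cost m \<le> 17 * 16" unfolding node_cost_def L_def[symmetric] using True L0 by (intro mult_mono) auto
    moreover have "sm < 256"
    proof -
      have "2 powr (L / 2) < 2 powr 8" using True by (intro powr_less_mono) auto
      then show ?thesis using two_powr_half_log[of "real m"] m unfolding sm_def L_def by simp
    qed
    ultimately show ?thesis unfolding lhs time_potential_def sm_def[symmetric] using S Q0 by simp
  next
    case False
    then have cost: "node_cost m \<le> 2 * sm" unfolding sm_def L_def using node_cost_le_sqrt m by simp
    have "4 * S \<le> Q * sm"
    proof -
      have "sqrt (4 ^ 2) \<le> sqrt (L + 1)" using False by (subst real_sqrt_le_iff) simp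
      then have "4 * S \<le> S * sqrt (L + 1)" unfolding S_def by (simp add: mult.commute mult_left_mono)
      then show ?thesis using gain by linarith
    qed
    show ?thesis
    proof (cases "S \<le> real m / 2")
      case True
      then show ?thesis unfolding lhs time_potential_def sm_def[symmetric] using cost sm Q0 by simp
    next
      case False
      then have "2 * sm * sm < Q * sm" using \<open>4 * S \<le> Q * sm\<close> sm(3) by linarith
      then have "2 * sm < Q" using sm(1) by (simp add: mult_less_cancel_right)
      then show ?thesis unfolding lhs time_potential_def sm_def[symmetric] using cost S by simp
    qed
  qed
qed

section \<open>Block partitions\<close>

definition accesses :: "(int \<times> nat) list \<Rightarrow> nat" where
  "accesses kcs = sum_list (map snd kcs)"

lemma accesses_simps [simp]:
  "accesses [] = 0" "accesses (p # kcs) = snd p + accesses kcs"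
  "accesses (kcs @ kcs') = accesses kcs + accesses kcs'"
  by (simp_all add: accesses_def)

lemma length_le_accesses: "\<forall>p\<in>set kcs. 1 \<le> snd p \<Longrightarrow> length kcs \<le> accesses kcs"
  by (induction kcs) auto

text \<open>A block partition \<open>(ps, l)\<close> of a key list pairs each block with the representative that
  follows it; \<open>l\<close> is the block after the last representative.\<close>

definition join_blocks :: "((int \<times> nat) list \<times> (int \<times> nat)) list \<Rightarrow> (int \<times> nat) list" where
  "join_blocks ps = concat (map (\<lambda>(b, r). b @ [r]) ps)"

lemma join_blocks_simps [simp]:
  "join_blocks [] = []" "join_blocks ((b, r) # ps) = b @ r # join_blocks ps"
  by (simp_all add: join_blocks_def)

lemma set_join_blocks:
  "set (join_blocks ps @ l) = set (map snd ps) \<union> (\<Union>s\<in>set (map fst ps @ [l]). set s)"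
  by (induction ps) auto

lemma length_join_blocks:
  "length (join_blocks ps @ l) = length ps + sum_list (map length (map fst ps @ [l]))"
  by (induction ps) auto

lemma accesses_join_blocks:
  "accesses (join_blocks ps @ l) = accesses (map snd ps) + sum_list (map accesses (map fst ps @ [l]))"
  by (induction ps) auto

lemma sorted_wrt_join_blocks:
  assumes "sorted_wrt R (join_blocks ps @ l)"
  shows "sorted_wrt R (map snd ps)" and "\<forall>s\<in>set (map fst ps @ [l]). sorted_wrt R s"
  using assms
proof (induction ps)
  case (Cons p ps)
  obtain b r where p: "p = (b, r)" by (cases p)
  { case 1
    then have "sorted_wrt R (r # (join_blocks ps @ l))"
      using sorted_wrt_append[of R b "r # (join_blocks ps @ l)"] by (simp add: p)
    then show ?case using Cons.IH(1) set_join_blocks[of ps l] by (auto simp: p) }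
  { case 2
    then have "sorted_wrt R b" "sorted_wrt R (join_blocks ps @ l)"
      using sorted_wrt_append[of R b "r # (join_blocks ps @ l)"] by (simp_all add: p)
    then show ?case using Cons.IH(2) by (auto simp: p) }
qed simp_all

lemma segment_Cons_0:
  assumes "\<forall>p\<in>set b. fst p < fst r" "\<forall>p\<in>set rest. fst r < fst p"
  shows "segment (r # reps) 0 (b @ r # rest) = b"
  using assms by (auto simp: segment_def filter_empty_conv intro!: filter_True)

lemma segment_Cons_Suc:
  assumes "\<forall>p\<in>set b. fst p < fst r" "\<forall>p\<in>set rest. fst r < fst p" "set reps \<subseteq> set rest"
    and "j \<le> length reps"
  shows "segment (r # reps) (Suc j) (b @ r # rest) = segment reps j rest"
proof -
  have lower: "fst r \<le> fst ((r # reps) ! j)"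
    using assms(2-4) nth_mem[of "j - 1" reps] by (cases j) fastforce+
  have "segment (r # reps) (Suc j) (b @ r # rest) = segment (r # reps) (Suc j) rest"
    using assms(1) lower by (auto simp: segment_def filter_empty_conv)
  also have "\<dots> = segment reps j rest"
    unfolding segment_def using assms(2) by (intro filter_cong) (auto simp: nth_Cons split: nat.split)
  finally show ?thesis .
qed

lemma segment_join_blocks:
  assumes "sorted_wrt (\<lambda>a b. fst a < fst b) (join_blocks ps @ l)" "j \<le> length ps"
  shows "segment (map snd ps) j (join_blocks ps @ l) = (map fst ps @ [l]) ! j"
  using assms
proof (induction ps arbitrary: j)
  case Nil
  then show ?case by (simp add: segment_def)
next
  case (Cons p ps)
  obtain b r where p: "p = (b, r)" by (cases p)
  have sorted: "sorted_wrt (\<lambda>a b. fst a < fst b) (b @ r # (join_blocks ps @ l))"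
    using Cons.prems(1) by (simp add: p)
  then have "sorted_wrt (\<lambda>a b. fst a < fst b) (r # (join_blocks ps @ l))" "\<forall>q\<in>set b. fst q < fst r"
    using sorted_wrt_append[of _ b "r # (join_blocks ps @ l)"] by auto
  then have around: "\<forall>q\<in>set b. fst q < fst r" "\<forall>q\<in>set (join_blocks ps @ l). fst r < fst q"
    and sorted': "sorted_wrt (\<lambda>a b. fst a < fst b) (join_blocks ps @ l)" by simp_all
  have reps: "set (map snd ps) \<subseteq> set (join_blocks ps @ l)" using set_join_blocks[of ps l] by blast
  show ?case
  proof (cases j)
    case 0
    then show ?thesis using segment_Cons_0[OF around] by (simp add: p)
  next
    case (Suc j')
    have j': "j' \<le> length ps" using Cons.prems(2) Suc by simp
    have "segment (map snd (p # ps)) j (join_blocks (p # ps) @ l) = segment (map snd ps) j' (join_blocks ps @ l)"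
      using segment_Cons_Suc[OF around reps] j' by (simp add: p Suc)
    also have "\<dots> = (map fst ps @ [l]) ! j'"
      using Cons.IH[OF sorted' j'] .
    finally show ?thesis by (simp add: Suc)
  qed
qed

lemma greedy_blocks:
  assumes "real (accesses cur) \<le> M"
  shows "\<exists>ps l. cur @ kcs = join_blocks ps @ l
    \<and> (\<forall>(b, r)\<in>set ps. real (accesses b) \<le> M \<and> M < real (accesses b + snd r)) \<and> real (accesses l) \<le> M"
  using assms
proof (induction kcs arbitrary: cur)
  case Nil
  then show ?case by (intro exI[of _ "[]"] exI[of _ cur]) simp
next
  case (Cons x kcs)
  show ?case
  proof (cases "M < real (accesses cur + snd x)")
    case True
    have "0 \<le> M" using Cons.prems by (rule order_trans[rotated]) simp
    then obtain ps l where "kcs = join_blocks ps @ l"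
      "\<forall>(b, r)\<in>set ps. real (accesses b) \<le> M \<and> M < real (accesses b + snd r)" "real (accesses l) \<le> M"
      using Cons.IH[of "[]"] by auto
    then show ?thesis using Cons.prems True by (intro exI[of _ "(cur, x) # ps"] exI[of _ l]) auto
  next
    case False
    then show ?thesis using Cons.IH[of "cur @ [x]"] by simp
  qed
qed

lemma sum_list_gt_length_mult:
  fixes f :: "'a \<Rightarrow> real"
  assumes "\<forall>x\<in>set xs. M < f x" "xs \<noteq> []"
  shows "real (length xs) * M < sum_list (map f xs)"
  using assms by (induction xs) (fastforce simp: algebra_simps)+

text \<open>The representatives are the elements at which the running total of a block would first
  exceed \<open>M\<close>, so there are fewer than \<open>accesses kcs / M\<close> of them, unless there is just one.\<close>

lemma block_partition:
  assumes "kcs \<noteq> []" "0 \<le> M"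
  obtains ps l where "kcs = join_blocks ps @ l" "ps \<noteq> []"
    "\<forall>s\<in>set (map fst ps @ [l]). real (accesses s) \<le> M"
    "length ps = 1 \<or> real (length ps) * M < real (accesses kcs)"
proof -
  obtain ps l where ps: "kcs = join_blocks ps @ l"
    "\<forall>(b, r)\<in>set ps. real (accesses b) \<le> M \<and> M < real (accesses b + snd r)" "real (accesses l) \<le> M"
    using greedy_blocks[of "[]" M kcs] assms(2) by auto
  show ?thesis
  proof (cases "ps = []")
    case True
    have "accesses (butlast kcs) \<le> accesses kcs"
      using append_butlast_last_id[OF assms(1)] by (metis accesses_simps(3) le_add1)
    then have "real (accesses (butlast kcs)) \<le> M" using ps(1,3) True by simp
    moreover have "kcs = join_blocks [(butlast kcs, last kcs)] @ []" using assms(1) by simp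
    ultimately show ?thesis using that[of "[(butlast kcs, last kcs)]" "[]"] assms(2) by simp
  next
    case False
    have "real (length ps) * M < (\<Sum>(b, r)\<leftarrow>ps. real (accesses b + snd r))"
      using ps(2) False by (intro sum_list_gt_length_mult) auto
    also have "\<dots> = real (accesses (join_blocks ps))" by (induction ps) auto
    also have "\<dots> \<le> real (accesses kcs)" using ps(1) by simp
    finally have "real (length ps) * M < real (accesses kcs)" .
    moreover have "\<forall>s\<in>set (map fst ps @ [l]). real (accesses s) \<le> M" using ps(2,3) by auto
    ultimately show ?thesis using that[of ps l] ps(1) False by blast
  qed
qed

section \<open>Greedy construction\<close>

lemma of_nat_sum_list_map: "of_nat (sum_list (map f xs)) = (\<Sum>x\<leftarrow>xs. of_nat (f x))"
  by (induction xs) auto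

lemma mass_is_gsat: "is_gsat D kcs T \<Longrightarrow> mass T = accesses kcs"
  by (induction rule: is_gsat.induct) (auto simp: accesses_def)

lemma depth_Node_le: "0 < d \<Longrightarrow> \<forall>t\<in>set ts. depth t < d \<Longrightarrow> depth (Node m reps ts) \<le> d"
  by (auto simp: Suc_le_eq)

lemma representatives_bound:
  assumes m: "1 \<le> m" and few: "k = 1 \<or> real k * (real m / (log 2 (real m) + 1)) < real m"
  shows "real k \<le> log 2 (real m) + 1" and "int k \<le> max 1 \<lceil>log 2 (real m)\<rceil>"
proof -
  have L: "0 \<le> log 2 (real m)" using m by simp
  have "real k < log 2 (real m) + 1" if "k \<noteq> 1"
  proof -
    have "real k * real m < (log 2 (real m) + 1) * real m" using few that L by (simp add: field_simps)
    then show ?thesis using mult_less_cancel_right_pos[of "real m"] m by simp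
  qed
  then show "real k \<le> log 2 (real m) + 1" and "int k \<le> max 1 \<lceil>log 2 (real m)\<rceil>"
    using L le_of_int_ceiling[of "log 2 (real m)"] by (cases "k = 1", auto, linarith)
qed

lemma is_gsat_Node_join_blocks:
  assumes sorted: "sorted_wrt (\<lambda>a b. fst a < fst b) (join_blocks ps @ l)"
    and ne: "ps \<noteq> []"
    and degree: "int (length ps) \<le> max 1 \<lceil>D (real (accesses (join_blocks ps @ l)))\<rceil>"
    and children: "\<forall>s\<in>set (map fst ps @ [l]). is_gsat D s (f s)"
  shows "is_gsat D (join_blocks ps @ l) (Node (accesses (join_blocks ps @ l)) (map snd ps) (map f (map fst ps @ [l])))"
proof (rule is_gsat.node)
  show "join_blocks ps @ l \<noteq> []" using ne by (cases ps) auto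
  show "sorted_wrt (\<lambda>a b. fst a < fst b) (map snd ps)" using sorted_wrt_join_blocks(1)[OF sorted] .
  show "set (map snd ps) \<subseteq> set (join_blocks ps @ l)" using set_join_blocks[of ps l] by blast
  show "\<forall>j<length (map f (map fst ps @ [l])). is_gsat D (segment (map snd ps) j (join_blocks ps @ l)) (map f (map fst ps @ [l]) ! j)"
    using children segment_join_blocks[OF sorted] by (auto simp: nth_append)
qed (use ne degree in \<open>auto simp: accesses_def\<close>)

definition bounded_salt :: "(int \<times> nat) list \<Rightarrow> gsat \<Rightarrow> bool" where
  "bounded_salt kcs T \<longleftrightarrow> is_salt kcs T \<and> ideal_salt T \<and> nkeys T = length kcs
    \<and> build_memory T \<le> 2 * real (length kcs)
    \<and> build_time T \<le> real (length kcs) * (3 + log 2 (real (length kcs)))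
    \<and> build_time T \<le> 3 * real (length kcs) + time_potential (accesses kcs)
    \<and> depth T \<le> depth_bound (accesses kcs)"

locale salt_node =
  fixes ps :: "((int \<times> nat) list \<times> (int \<times> nat)) list" and l :: "(int \<times> nat) list"
    and f :: "(int \<times> nat) list \<Rightarrow> gsat"
    and kcs :: "(int \<times> nat) list" and segs :: "(int \<times> nat) list list" and m :: nat
  assumes kcs: "kcs = join_blocks ps @ l" and segs: "segs = map fst ps @ [l]" and m: "m = accesses kcs"
    and sorted: "sorted_wrt (\<lambda>a b. fst a < fst b) kcs" and pos: "\<forall>p\<in>set kcs. 1 \<le> snd p"
    and ne: "ps \<noteq> []"
    and light: "\<forall>s\<in>set segs. real (accesses s) \<le> real m / (log 2 (real m) + 1)"
    and few: "length ps = 1 \<or> real (length ps) * (real m / (log 2 (real m) + 1)) < real m"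
    and children: "\<forall>s\<in>set segs. bounded_salt s (f s)"
begin

abbreviation node :: gsat where
  "node \<equiv> Node m (map snd ps) (map f segs)"

abbreviation n :: nat where
  "n \<equiv> length kcs"

abbreviation k :: nat where
  "k \<equiv> length ps"

lemma k_pos: "1 \<le> k"
  using ne by (cases ps) auto

lemma n_eq: "n = k + sum_list (map length segs)"
  unfolding kcs segs by (rule length_join_blocks)

lemma segs_length: "(\<Sum>s\<leftarrow>segs. real (length s)) = real n - real k"
  using n_eq by (simp add: of_nat_sum_list_map[symmetric])

lemma seg_length_le: "s \<in> set segs \<Longrightarrow> length s \<le> n"
  using member_le_sum_list[of "length s" "map length segs"] n_eq by simp

lemma n_le_m: "n \<le> m"
  using length_le_accesses[OF pos] unfolding m .

lemma n_pos: "1 \<le> n"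
  using n_eq k_pos by simp

lemma kcs_ne: "kcs \<noteq> []"
  using n_pos by auto

lemma segs_accesses: "sum_list (map accesses segs) + 1 \<le> m"
proof -
  have "set (map snd ps) \<subseteq> set kcs" using set_join_blocks[of ps l] unfolding kcs by blast
  then have "k \<le> accesses (map snd ps)" using length_le_accesses[of "map snd ps"] pos by auto
  then show ?thesis using accesses_join_blocks[of ps l] k_pos unfolding m kcs segs by simp
qed

lemma seg_accesses: "s \<in> set segs \<Longrightarrow> accesses s + 1 \<le> m"
  using member_le_sum_list[of "accesses s" "map accesses segs"] segs_accesses by simp

lemma m_pos: "1 \<le> m"
  using n_pos n_le_m by simp

lemmas length_ps_le = representatives_bound[OF m_pos few]

lemma is_salt_node: "is_salt kcs node"
  unfolding is_salt_def kcs segs m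
  using sorted ne length_ps_le(2) children
  by (intro is_gsat_Node_join_blocks) (auto simp: kcs m segs D_salt_def bounded_salt_def is_salt_def)

lemma ideal_salt_node: "ideal_salt node"
  using children light mass_is_gsat unfolding ideal_salt_def bounded_salt_def is_salt_def D_salt_def
  by fastforce

lemma nkeys_node: "nkeys node = n"
proof -
  have "sum_list (map (nkeys \<circ> f) segs) = sum_list (map length segs)"
    using children by (intro arg_cong[of _ _ sum_list] map_cong) (auto simp: bounded_salt_def)
  then show ?thesis using n_eq by simp
qed

lemma build_memory_node: "build_memory node \<le> 2 * real n"
proof -
  have "sum_list (map (build_memory \<circ> f) segs) \<le> (\<Sum>s\<leftarrow>segs. 2 * real (length s))"
    using children by (intro sum_list_mono) (auto simp: bounded_salt_def)
  then show ?thesis using k_pos unfolding sum_list_const_mult segs_length by simp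
qed

lemma build_time_node:
  "build_time node = real (1 + k) + real k * (1 + log 2 (real n)) + (\<Sum>s\<leftarrow>segs. build_time (f s))"
  using nkeys_node by (simp add: o_def)

lemma build_time_node_le_log: "build_time node \<le> real n * (3 + log 2 (real n))"
proof -
  have "(\<Sum>s\<leftarrow>segs. build_time (f s)) \<le> (\<Sum>s\<leftarrow>segs. real (length s) * (3 + log 2 (real n)))"
  proof (rule sum_list_mono)
    fix s assume s: "s \<in> set segs"
    then have "build_time (f s) \<le> real (length s) * (3 + log 2 (real (length s)))"
      using children by (auto simp: bounded_salt_def)
    also have "\<dots> \<le> real (length s) * (3 + log 2 (real n))"
    proof (cases "s = []")
      case False
      then have "log 2 (real (length s)) \<le> log 2 (real n)" using seg_length_le[OF s] by (intro log_mono) auto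
      then show ?thesis by (simp add: mult_left_mono)
    qed simp
    finally show "build_time (f s) \<le> real (length s) * (3 + log 2 (real n))" .
  qed
  then show ?thesis
    using k_pos unfolding build_time_node sum_list_mult_const segs_length by (simp add: algebra_simps)
qed

lemma build_time_node_le_potential: "build_time node \<le> 3 * real n + time_potential m"
proof -
  have "(\<Sum>s\<leftarrow>segs. build_time (f s)) \<le> (\<Sum>s\<leftarrow>segs. 3 * real (length s) + time_potential (accesses s))"
    using children by (intro sum_list_mono) (auto simp: bounded_salt_def)
  moreover have "node_cost m + (\<Sum>s\<leftarrow>segs. time_potential (accesses s)) \<le> time_potential m"
    using time_potential_split[OF m_pos _ segs_accesses] light by (simp add: o_def)
  moreover have "real k * log 2 (real n) \<le> node_cost m"
  proof -
    have "log 2 (real n) \<le> log 2 (real m)" using kcs_ne n_le_m by (intro log_mono) simp_all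
    moreover have "0 \<le> log 2 (real n)" using log_mono[of 2 1 "real n"] n_pos kcs_ne by simp
    ultimately show ?thesis unfolding node_cost_def using length_ps_le(1) by (intro mult_mono) auto
  qed
  ultimately show ?thesis
    using k_pos unfolding build_time_node sum_list_addf sum_list_const_mult segs_length by (simp add: algebra_simps)
qed

lemma depth_node: "depth node \<le> depth_bound m"
proof (rule depth_Node_le)
  show "0 < depth_bound m" using m_pos by (simp add: depth_bound_def)
  show "\<forall>t\<in>set (map f segs). depth t < depth_bound m"
  proof
    fix t assume "t \<in> set (map f segs)"
    then obtain s where s: "s \<in> set segs" "t = f s" by auto
    have "depth (f s) \<le> depth_bound (accesses s)" using children s by (auto simp: bounded_salt_def)
    moreover have "depth_bound (accesses s) < depth_bound m"
      using depth_bound_child[of "accesses s" m] seg_accesses[OF s(1)] light s m_pos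
      by (cases "accesses s = 0") (auto simp: depth_bound_def)
    ultimately show "depth t < depth_bound m" using s by simp
  qed
qed

lemma bounded_salt_node: "bounded_salt kcs node"
  using is_salt_node ideal_salt_node nkeys_node build_memory_node build_time_node_le_log
    build_time_node_le_potential depth_node
  unfolding bounded_salt_def m by simp

end


lemma length_block_less:
  assumes "ps \<noteq> []" "s \<in> set (map fst ps @ [l])"
  shows "length s < length (join_blocks ps @ l)"
proof -
  have "length s \<le> sum_list (map length (map fst ps @ [l]))"
    using member_le_sum_list[of "length s" "map length (map fst ps @ [l])"] assms(2) by fastforce
  then show ?thesis using assms(1) unfolding length_join_blocks by (cases ps) auto
qed

lemma bounded_salt_exists:
  "sorted_wrt (\<lambda>a b. fst a < fst b) kcs \<Longrightarrow> \<forall>p\<in>set kcs. 1 \<le> snd p \<Longrightarrow> \<exists>T. bounded_salt kcs T"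
proof (induction "length kcs" arbitrary: kcs rule: less_induct)
  case less
  show ?case
  proof (cases "kcs = []")
    case True
    then show ?thesis
      by (intro exI[of _ Leaf])
        (simp add: bounded_salt_def is_salt_def ideal_salt_def is_gsat.leaf time_potential_def depth_bound_def)
  next
    case False
    define m where "m = accesses kcs"
    define M where "M = real m / (log 2 (real m) + 1)"
    have "1 \<le> m" using length_le_accesses[OF less.prems(2)] False unfolding m_def by (cases kcs) auto
    then have "0 \<le> M" unfolding M_def by simp
    then obtain ps l where ps: "kcs = join_blocks ps @ l" "ps \<noteq> []"
      "\<forall>s\<in>set (map fst ps @ [l]). real (accesses s) \<le> M"
      "length ps = 1 \<or> real (length ps) * M < real (accesses kcs)"
      using block_partition[OF False] by blast
    have "\<exists>T. bounded_salt s T" if s: "s \<in> set (map fst ps @ [l])" for s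
    proof (rule less.hyps)
      show "length s < length kcs" using length_block_less[OF ps(2) s] ps(1) by simp
      show "sorted_wrt (\<lambda>a b. fst a < fst b) s"
        using sorted_wrt_join_blocks(2) less.prems(1) s unfolding ps(1) by blast
      show "\<forall>p\<in>set s. 1 \<le> snd p" using less.prems(2) s set_join_blocks[of ps l] unfolding ps(1) by blast
    qed
    then obtain f where "\<forall>s\<in>set (map fst ps @ [l]). bounded_salt s (f s)" by metis
    then have "salt_node ps l f kcs (map fst ps @ [l]) m"
      using less.prems ps unfolding M_def m_def by unfold_locales auto
    then show ?thesis using salt_node.bounded_salt_node by blast
  qed
qed

lemma bounded_salt_time_le_accesses:
  assumes "bounded_salt kcs T" "\<forall>p\<in>set kcs. 1 \<le> snd p"
  shows "build_time T \<le> 1003 * real (accesses kcs)"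
proof -
  have "real (length kcs) \<le> real (accesses kcs)" using length_le_accesses[OF assms(2)] by simp
  then show ?thesis using assms(1) real_sqrt_ge_zero[of "real (accesses kcs)"]
    unfolding bounded_salt_def time_potential_def by linarith
qed

lemma one_le_log2: "2 \<le> x \<Longrightarrow> 1 \<le> log 2 x"
  by simp

lemma bounded_salt_time_le_n_log:
  assumes "bounded_salt kcs T" "2 \<le> length kcs"
  shows "build_time T \<le> 4 * (real (length kcs) * log 2 (real (length kcs)))"
proof -
  have "1 \<le> log 2 (real (length kcs))" using assms(2) by (intro one_le_log2) simp
  then have "real (length kcs) * (3 + log 2 (real (length kcs)))
      \<le> real (length kcs) * (4 * log 2 (real (length kcs)))"
    by (intro mult_left_mono) auto
  then show ?thesis using assms(1) unfolding bounded_salt_def by simp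
qed

lemma bounded_salt_depth_le:
  assumes "bounded_salt kcs T" "4 \<le> accesses kcs"
  shows "real (depth T) \<le> 40 * log 2 (real (accesses kcs)) / log 2 (log 2 (real (accesses kcs)))"
  using assms depth_bound_le[of "accesses kcs"] unfolding bounded_salt_def by simp

lemma log_div_log_log_nonneg: "4 \<le> x \<Longrightarrow> 0 \<le> log 2 x / log 2 (log 2 x)"
proof -
  assume "4 \<le> x"
  then have "2 \<le> log 2 x" by (simp add: le_log_iff)
  then show ?thesis by simp
qed

theorem theorem10:
  shows "\<exists>C > 0. \<forall>kcs :: (int \<times> nat) list.
           sorted_wrt (\<lambda>a b. fst a < fst b) kcs \<longrightarrow>
           (\<forall>p \<in> set kcs. 1 \<le> snd p) \<longrightarrow>
           (let n = length kcs; m = sum_list (map snd kcs) in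
            \<exists>T. is_salt kcs T \<and> ideal_salt T
              \<and> (2 \<le> n \<longrightarrow> build_time T \<le> C * min (real n * log 2 (real n)) (real m))
              \<and> build_memory T \<le> C * real n
              \<and> (4 \<le> m \<longrightarrow> real (depth T) \<le> C * log 2 (real m) / log 2 (log 2 (real m))))"
proof (intro exI[of _ "1003::real"] conjI allI impI)
  fix kcs :: "(int \<times> nat) list"
  assume sorted: "sorted_wrt (\<lambda>a b. fst a < fst b) kcs" and pos: "\<forall>p \<in> set kcs. 1 \<le> snd p"
  obtain T where T: "bounded_salt kcs T" using bounded_salt_exists[OF sorted pos] by blast
  define n where "n = length kcs"
  define m where "m = sum_list (map snd kcs)"
  have "build_time T \<le> 1003 * (real n * log 2 (real n))" if "2 \<le> n"
  proof -
    have "0 \<le> real n * log 2 (real n)" using one_le_log2[of "real n"] that by simp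
    then show ?thesis using bounded_salt_time_le_n_log[OF T] that unfolding n_def by linarith
  qed
  moreover have "real (depth T) \<le> 1003 * log 2 (real m) / log 2 (log 2 (real m))" if "4 \<le> m"
    using bounded_salt_depth_le[OF T] log_div_log_log_nonneg[of "real m"] that
    unfolding m_def accesses_def by simp
  ultimately show "let n = length kcs; m = sum_list (map snd kcs) in
            \<exists>T. is_salt kcs T \<and> ideal_salt T
              \<and> (2 \<le> n \<longrightarrow> build_time T \<le> 1003 * min (real n * log 2 (real n)) (real m))
              \<and> build_memory T \<le> 1003 * real n
              \<and> (4 \<le> m \<longrightarrow> real (depth T) \<le> 1003 * log 2 (real m) / log 2 (log 2 (real m)))"
    using T bounded_salt_time_le_accesses[OF T pos]
    unfolding bounded_salt_def Let_def n_def[symmetric] m_def[symmetric] accesses_def by auto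
qed simp

end
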